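(* Let $G$ be a distribution function on $\mathbb{R}$ with $G(0)=0$ and $G(\epsilon)>0$ for all $\epsilon>0$, and let $C=C(G)$ be the associated delay copula. Then there exists $\sigma\in\mathbb{S}$ with $C^{\mathbb{S},2}(\sigma,\sigma)-C^{\mathbb{S}}(\sigma)^2\neq 0$.
   Context: The delay copula $C(G)$ is the copula of the random vector $(X,X+D)$, where $X$ is uniformly distributed on $[0,1]$, $D$ is independent of $X$ and has distribution function $G$; i.e. $C(G)(u,v)=\mathbb{P}(F_1(X)\le u,F_2(X+D)\le v)$ with $F_1,F_2$ the (continuous) marginal distribution functions. $\mathbb{S}_k$ is the set of permutations of $[k]$, $\mathbb{S}=\bigsqcup_k\mathbb{S}_k$. For points $(u_i,v_i)$, $i\le k$, with no ties in either coordinate, $\Pi_k$ is the unique $\pi\in\mathbb{S}_k$ with $u_i<u_j\iff v_{\pi(i)}<v_{\pi(j)}$. For a copula $C$ and independent $Z_1,Z_2,Z_2',\dots$ with distribution function $C$: $C^{\mathbb{S}}(\sigma)=\mathbb{P}(\Pi_k(Z_1,\dots,Z_k)=\sigma)$ for $\sigma\in\mathbb{S}_k$, and $C^{\mathbb{S},2}(\sigma,\tau)=\mathbb{P}(\Pi_k(Z_1,Z_2,\dots,Z_k)=\sigma,\ \Pi_j(Z_1,Z_2',\dots,Z_j')=\tau)$ for $\sigma\in\mathbb{S}_k,\tau\in\mathbb{S}_j$. *)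

theory Defs
  imports "HOL-Probability.Probability"
begin

text \<open>The law of D is given as a real probability measure with distribution
function G = cdf D.  X is uniform on [0,1], independent of D.\<close>

definition delay_joint :: "real measure \<Rightarrow> (real \<times> real) measure" where
  "delay_joint D = distr (uniform_measure lborel {0..1} \<Otimes>\<^sub>M D) borel (\<lambda>(x, d). (x, x + d))"

definition delay_F1 :: "real measure \<Rightarrow> real \<Rightarrow> real" where
  "delay_F1 D = cdf (distr (delay_joint D) borel fst)"

definition delay_F2 :: "real measure \<Rightarrow> real \<Rightarrow> real" where
  "delay_F2 D = cdf (distr (delay_joint D) borel snd)"

text \<open>The probability measure on the unit square whose distribution function is the
delay copula C(G), i.e. the law of (F1(X), F2(X+D)).\<close>
definition delay_copula_measure :: "real measure \<Rightarrow> (real \<times> real) measure" where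
  "delay_copula_measure D =
     distr (delay_joint D) borel (\<lambda>(x, y). (delay_F1 D x, delay_F2 D y))"

definition delay_copula :: "real measure \<Rightarrow> real \<Rightarrow> real \<Rightarrow> real" where
  "delay_copula D u v = measure (delay_copula_measure D) ({..u} \<times> {..v})"

definition no_ties :: "nat \<Rightarrow> (nat \<Rightarrow> real \<times> real) \<Rightarrow> bool" where
  "no_ties k z \<longleftrightarrow>
     (\<forall>i<k. \<forall>j<k. i \<noteq> j \<longrightarrow> fst (z i) \<noteq> fst (z j) \<and> snd (z i) \<noteq> snd (z j))"

definition perm_pattern :: "nat \<Rightarrow> (nat \<Rightarrow> real \<times> real) \<Rightarrow> (nat \<Rightarrow> nat)" where
  "perm_pattern k z = (THE \<pi>. \<pi> permutes {..<k} \<and>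
     (\<forall>i<k. \<forall>j<k. fst (z i) < fst (z j) \<longleftrightarrow> snd (z (\<pi> i)) < snd (z (\<pi> j))))"

text \<open>C^S(\<sigma>) for \<sigma> in S_k: Z_0..Z_(k-1) iid with law C.\<close>
definition copula_perm_prob :: "(real \<times> real) measure \<Rightarrow> nat \<Rightarrow> (nat \<Rightarrow> nat) \<Rightarrow> real" where
  "copula_perm_prob C k \<sigma> =
     measure (PiM {..<k} (\<lambda>_. C))
       {z \<in> space (PiM {..<k} (\<lambda>_. C)). no_ties k z \<and> perm_pattern k z = \<sigma>}"

text \<open>C^{S,2}(\<sigma>,\<tau>) for \<sigma> in S_k, \<tau> in S_j: the second family z' shares its first
point with the first family (z' 0 is replaced by z 0), all other points independent.\<close>
definition copula_perm_prob2 ::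
  "(real \<times> real) measure \<Rightarrow> nat \<Rightarrow> (nat \<Rightarrow> nat) \<Rightarrow> nat \<Rightarrow> (nat \<Rightarrow> nat) \<Rightarrow> real" where
  "copula_perm_prob2 C k \<sigma> j \<tau> =
     measure (PiM {..<k} (\<lambda>_. C) \<Otimes>\<^sub>M PiM {..<j} (\<lambda>_. C))
       {p \<in> space (PiM {..<k} (\<lambda>_. C) \<Otimes>\<^sub>M PiM {..<j} (\<lambda>_. C)).
          no_ties k (fst p) \<and> perm_pattern k (fst p) = \<sigma> \<and>
          no_ties j ((snd p)(0 := fst p 0)) \<and> perm_pattern j ((snd p)(0 := fst p 0)) = \<tau>}"

end

theory Submission
  imports Defs
begin

(* Take for sigma the transposition of S_2, the discordant pattern of two points.  For a
   bivariate law C let h(a) be the probability that a C-distributed point is discordant with a.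
   Then C^S(sigma) = E h(Z) and, since the two families share only their first point,
   C^{S,2}(sigma,sigma) = E h(Z)^2; the difference is the variance of h(Z), so it suffices that
   h(Z) is not almost surely constant.
   The delay copula is the image of the law of (X, D) under (x, d) |-> (F1 x, F2 (x + d)).  If
   0 < x, d <= delta, every (X, D) whose image is discordant with that of (x, d) has X <= 2 delta
   or D <= 0, so h <= 2 delta + G(0) = 2 delta there, and such (x, d) have positive probability
   because G(delta) > 0.  If x is small and d exceeds some b with P(D > b) > 0, the image of
   (x, d) is discordant with the images of a small rectangle of positive probability to the
   right of x, so h > 0 there.  Hence h(Z) is not almost surely equal to any constant c:
   the second set forces c > 0, the first c <= c/2. *)

section \<open>Patterns of two points\<close>

definition discordant :: "real \<times> real \<Rightarrow> real \<times> real \<Rightarrow> bool" where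
  "discordant a b \<longleftrightarrow> (fst a < fst b \<and> snd b < snd a) \<or> (fst b < fst a \<and> snd a < snd b)"

lemma permutes_lessThan_2_iff:
  "\<pi> permutes {..<2::nat} \<longleftrightarrow> \<pi> = id \<or> \<pi> = Transposition.transpose 0 1"
proof -
  have "{..<2::nat} = {0, 1}" by auto
  then show ?thesis by (simp add: permutes_doubleton_iff)
qed

lemma perm_pattern_2:
  assumes "no_ties 2 z"
  shows "perm_pattern 2 z = (if discordant (z 0) (z 1) then Transposition.transpose 0 1 else id)"
proof -
  have all2: "(\<forall>i<2. P i) \<longleftrightarrow> P 0 \<and> P 1" for P :: "nat \<Rightarrow> bool"
    by (auto simp: less_2_cases_iff)
  have "fst (z 0) \<noteq> fst (z 1)" "snd (z 0) \<noteq> snd (z 1)"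
    using assms by (auto simp: no_ties_def all2)
  then show ?thesis
    unfolding perm_pattern_def
    by (intro the_equality) (auto simp: permutes_lessThan_2_iff all2 discordant_def)
qed

lemma transpose_01_neq_id: "Transposition.transpose (0::nat) 1 \<noteq> id"
  by (metis id_apply transpose_apply_first zero_neq_one)

lemma perm_pattern_2_eq_transpose_iff:
  "no_ties 2 z \<and> perm_pattern 2 z = Transposition.transpose 0 1 \<longleftrightarrow> discordant (z 0) (z 1)"
proof -
  have "discordant (z 0) (z 1) \<Longrightarrow> no_ties 2 z"
    by (auto simp: no_ties_def discordant_def less_2_cases_iff)
  then show ?thesis using perm_pattern_2 transpose_01_neq_id by fastforce
qed

lemma pred_discordant[measurable (raw)]:
  assumes "f \<in> M \<rightarrow>\<^sub>M borel" "g \<in> M \<rightarrow>\<^sub>M borel"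
  shows "Measurable.pred M (\<lambda>x. discordant (f x) (g x))"
proof -
  have [measurable]: "f \<in> M \<rightarrow>\<^sub>M borel \<Otimes>\<^sub>M borel" "g \<in> M \<rightarrow>\<^sub>M borel \<Otimes>\<^sub>M borel"
    using assms by (simp_all add: borel_prod)
  show ?thesis unfolding discordant_def by measurable
qed

section \<open>Discordance probability of a bivariate law\<close>

lemma distr_PiM_lessThan_2_pair:
  assumes M: "sigma_finite_measure M"
  shows "distr (PiM {..<2::nat} (\<lambda>_. M)) (M \<Otimes>\<^sub>M M) (\<lambda>z. (z 0, z 1)) = M \<Otimes>\<^sub>M M"
proof -
  interpret product_sigma_finite "\<lambda>_::nat. M"
    using M by (simp add: product_sigma_finite_def)
  let ?P = "PiM {..<2::nat} (\<lambda>_. M)"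
  have "M \<Otimes>\<^sub>M M = distr ?P (M \<Otimes>\<^sub>M M) (\<lambda>z. (z 0, z 1))"
  proof (rule pair_measure_eqI[OF M M])
    fix A B assume A: "A \<in> sets M" and B: "B \<in> sets M"
    let ?F = "\<lambda>i::nat. if i = 0 then A else B"
    have "(\<lambda>z. (z 0, z 1)) -` (A \<times> B) \<inter> space ?P = PiE {..<2} ?F" (is "?L = _")
    proof (intro set_eqI iffI)
      fix z assume "z \<in> ?L"
      then show "z \<in> PiE {..<2} ?F" by (auto simp: space_PiM PiE_def Pi_def less_2_cases_iff)
    next
      fix z assume z: "z \<in> PiE {..<2} ?F"
      have "z 0 \<in> A" "z 1 \<in> B" using PiE_mem[OF z, of 0] PiE_mem[OF z, of 1] by simp_all
      with z A B show "z \<in> ?L"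
        by (auto simp: space_PiM PiE_def Pi_def less_2_cases_iff dest: sets.sets_into_space)
    qed
    then have "emeasure (distr ?P (M \<Otimes>\<^sub>M M) (\<lambda>z. (z 0, z 1))) (A \<times> B) = emeasure ?P (PiE {..<2} ?F)"
      using A B by (simp add: emeasure_distr)
    also have "\<dots> = emeasure M A * emeasure M B"
      using A B by (simp add: emeasure_PiM lessThan_Suc numeral_2_eq_2 mult.commute)
    finally show "emeasure M A * emeasure M B = emeasure (distr ?P (M \<Otimes>\<^sub>M M) (\<lambda>z. (z 0, z 1))) (A \<times> B)"
      by simp
  qed simp
  then show ?thesis ..
qed

lemma nn_integral_PiM_lessThan_2:
  assumes M: "sigma_finite_measure M" and f: "f \<in> borel_measurable (M \<Otimes>\<^sub>M M)"
  shows "(\<integral>\<^sup>+z. f (z 0, z 1) \<partial>PiM {..<2::nat} (\<lambda>_. M)) = (\<integral>\<^sup>+a. \<integral>\<^sup>+b. f (a, b) \<partial>M \<partial>M)"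
proof -
  have "(\<integral>\<^sup>+z. f (z 0, z 1) \<partial>PiM {..<2::nat} (\<lambda>_. M))
      = (\<integral>\<^sup>+p. f p \<partial>distr (PiM {..<2::nat} (\<lambda>_. M)) (M \<Otimes>\<^sub>M M) (\<lambda>z. (z 0, z 1)))"
    using f by (intro nn_integral_distr[symmetric]) auto
  also have "\<dots> = (\<integral>\<^sup>+a. \<integral>\<^sup>+b. f (a, b) \<partial>M \<partial>M)"
    unfolding distr_PiM_lessThan_2_pair[OF M] using f
    by (rule sigma_finite_measure.nn_integral_fst[OF M, symmetric])
  finally show ?thesis .
qed

lemma (in prob_space) variance_eq_0_imp_AE_eq_expectation:
  fixes X :: "'a \<Rightarrow> real"
  assumes X: "X \<in> borel_measurable M"
    and square: "integrable M (\<lambda>x. (X x)\<^sup>2)" and "variance X = 0"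
  shows "AE x in M. X x = expectation X"
proof -
  have "integrable M X"
    using square_integrable_imp_integrable[OF X square] .
  then have "integrable M (\<lambda>x. (X x)\<^sup>2 + (expectation X)\<^sup>2 - 2 * X x * expectation X)"
    using square by (intro Bochner_Integration.integrable_add Bochner_Integration.integrable_diff
        integrable_mult_left integrable_mult_right integrable_const)
  then have "integrable M (\<lambda>x. (X x - expectation X)\<^sup>2)"
    by (simp only: power2_diff)
  moreover have "AE x in M. 0 \<le> (X x - expectation X)\<^sup>2"
    by (intro AE_I2) simp
  ultimately have "AE x in M. (X x - expectation X)\<^sup>2 = 0"
    using \<open>variance X = 0\<close> by (simp only: integral_nonneg_eq_0_iff_AE)
  then show ?thesis
    by (rule AE_mp) (intro AE_I2, simp)
qed

lemma AE_obtain_in_positive_set: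
  assumes "AE x in M. P x" "A \<in> sets M" "0 < measure M A"
  obtains x where "x \<in> A" "P x"
proof -
  have "{x \<in> space M. x \<in> A} = A"
    using sets.sets_into_space[OF assms(2)] by auto
  moreover have "emeasure M A \<noteq> 0"
    using assms(3) by (auto simp: measure_def)
  ultimately have "\<not> (AE x in M. x \<notin> A)"
    using assms(2) by (simp add: AE_iff_measurable[OF _ refl])
  moreover have "AE x in M. x \<notin> A" if "\<forall>x\<in>A. \<not> P x"
    using assms(1) by eventually_elim (use that in auto)
  ultimately show ?thesis
    using that by blast
qed

definition discordance_prob :: "(real \<times> real) measure \<Rightarrow> real \<times> real \<Rightarrow> real" where
  "discordance_prob C a = measure C {b. discordant a b}"

context
  fixes C :: "(real \<times> real) measure"
  assumes prob_C: "prob_space C" and sets_C: "sets C = sets borel"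
begin

interpretation prob_space C by (rule prob_C)

lemma measurable_C_iff: "measurable N C = measurable N borel"
  by (rule measurable_cong_sets[OF refl sets_C])

lemma measurable_component_C[measurable]:
  "i \<in> I \<Longrightarrow> (\<lambda>z. z i) \<in> PiM I (\<lambda>_. C) \<rightarrow>\<^sub>M borel"
  unfolding measurable_C_iff[symmetric] by measurable

lemma sets_discordant: "{b. discordant a b} \<in> sets C"
proof -
  have "{b \<in> space borel. discordant a b} \<in> sets borel" by measurable
  then show ?thesis by (simp add: sets_C)
qed

lemma sets_pair_discordant: "{p. discordant (fst p) (snd p)} \<in> sets (C \<Otimes>\<^sub>M C)"
proof -
  have "{p \<in> space (borel \<Otimes>\<^sub>M borel). discordant (fst p) (snd p)}
      \<in> sets (borel \<Otimes>\<^sub>M borel :: ((real \<times> real) \<times> (real \<times> real)) measure)"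
    by measurable
  then show ?thesis by (simp add: sets_pair_measure_cong[OF sets_C sets_C] space_pair_measure)
qed

lemma emeasure_discordant: "emeasure C {b. discordant a b} = ennreal (discordance_prob C a)"
  by (simp add: discordance_prob_def emeasure_eq_measure)

lemma discordance_prob_bounds: "0 \<le> discordance_prob C a" "discordance_prob C a \<le> 1"
  by (simp_all add: discordance_prob_def)

lemma borel_measurable_discordance_prob[measurable]: "discordance_prob C \<in> borel_measurable C"
proof -
  have "discordance_prob C = (\<lambda>a. enn2real (emeasure C (Pair a -` {p. discordant (fst p) (snd p)})))"
    by (rule ext) (simp add: discordance_prob_def measure_def vimage_def)
  also have "\<dots> \<in> borel_measurable C"
    by (intro borel_measurable_enn2real measurable_emeasure_Pair sets_pair_discordant)
  finally show ?thesis .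
qed

lemma integrable_discordance_prob_power: "integrable C (\<lambda>a. discordance_prob C a ^ n)"
  using discordance_prob_bounds
  by (intro integrable_const_bound[where B=1]) (auto simp: power_le_one)

lemma emeasure_PiM_discordant_component:
  assumes "i \<in> I"
  shows "emeasure (PiM I (\<lambda>_. C)) {w \<in> space (PiM I (\<lambda>_. C)). discordant a (w i)}
    = ennreal (discordance_prob C a)"
proof -
  have "emeasure (PiM I (\<lambda>_. C)) {w \<in> space (PiM I (\<lambda>_. C)). discordant a (w i)}
      = emeasure (distr (PiM I (\<lambda>_. C)) C (\<lambda>w. w i)) {b. discordant a b}"
    using assms sets_discordant by (subst emeasure_distr) (auto simp: vimage_def Int_def conj_commute)
  also have "\<dots> = emeasure C {b. discordant a b}"
    using assms prob_C by (subst distr_PiM_component) auto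
  finally show ?thesis by (simp add: emeasure_discordant)
qed

lemma copula_perm_prob_transpose_01:
  "copula_perm_prob C 2 (Transposition.transpose 0 1) = (\<integral>a. discordance_prob C a \<partial>C)"
proof -
  let ?P = "PiM {..<2::nat} (\<lambda>_. C)" and ?\<Delta> = "{p. discordant (fst p) (snd p)}"
  let ?S = "{z \<in> space ?P. discordant (z 0) (z 1)}"
  have "?S \<in> sets ?P" by measurable
  then have "emeasure ?P ?S = (\<integral>\<^sup>+z. indicator ?S z \<partial>?P)"
    by (rule nn_integral_indicator[symmetric])
  also have "\<dots> = (\<integral>\<^sup>+z. indicator ?\<Delta> (z 0, z 1) \<partial>?P)"
    by (intro nn_integral_cong) (simp add: indicator_def)
  also have "\<dots> = (\<integral>\<^sup>+a. \<integral>\<^sup>+b. indicator ?\<Delta> (a, b) \<partial>C \<partial>C)"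
    using sets_pair_discordant by (intro nn_integral_PiM_lessThan_2[OF sigma_finite_measure_axioms]) simp
  also have "\<dots> = (\<integral>\<^sup>+a. ennreal (discordance_prob C a) \<partial>C)"
    using sets_discordant
    by (intro nn_integral_cong)
      (simp add: emeasure_discordant[symmetric] indicator_def flip: nn_integral_indicator)
  also have "\<dots> = ennreal (\<integral>a. discordance_prob C a \<partial>C)"
    using integrable_discordance_prob_power[of 1] discordance_prob_bounds
    by (intro nn_integral_eq_integral) auto
  finally show ?thesis
    unfolding copula_perm_prob_def perm_pattern_2_eq_transpose_iff
    by (intro measure_eq_emeasure_eq_ennreal integral_nonneg) (simp_all add: discordance_prob_bounds)
qed

lemma emeasure_discordant_shared_first_point:
  "emeasure (PiM {..<2::nat} (\<lambda>_. C) \<Otimes>\<^sub>M PiM {..<2::nat} (\<lambda>_. C))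
     {p \<in> space (PiM {..<2::nat} (\<lambda>_. C) \<Otimes>\<^sub>M PiM {..<2::nat} (\<lambda>_. C)).
        discordant (fst p 0) (fst p 1) \<and> discordant (fst p 0) (snd p 1)}
   = (\<integral>\<^sup>+z. indicator {p. discordant (fst p) (snd p)} (z 0, z 1) * ennreal (discordance_prob C (z 0))
       \<partial>PiM {..<2::nat} (\<lambda>_. C))"
  (is "emeasure (?P \<Otimes>\<^sub>M ?P) ?S = _")
proof -
  interpret P: prob_space ?P by (intro prob_space_PiM prob_C)
  have "Measurable.pred (?P \<Otimes>\<^sub>M ?P)
      (\<lambda>p. discordant (fst p 0) (fst p 1) \<and> discordant (fst p 0) (snd p 1))"
    by (rule pred_intros_logic(3);
        rule pred_discordant;
        rule measurable_compose[OF measurable_fst measurable_component_C]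
          measurable_compose[OF measurable_snd measurable_component_C];
        simp)
  then have "?S \<in> sets (?P \<Otimes>\<^sub>M ?P)"
    by (simp only: pred_def)
  then have "emeasure (?P \<Otimes>\<^sub>M ?P) ?S = (\<integral>\<^sup>+z. emeasure ?P (Pair z -` ?S) \<partial>?P)"
    by (rule P.emeasure_pair_measure_alt)
  also have "\<dots> = (\<integral>\<^sup>+z. indicator {p. discordant (fst p) (snd p)} (z 0, z 1)
      * ennreal (discordance_prob C (z 0)) \<partial>?P)"
  proof (intro nn_integral_cong)
    fix z assume "z \<in> space ?P"
    then have "Pair z -` ?S
        = (if discordant (z 0) (z 1) then {w \<in> space ?P. discordant (z 0) (w 1)} else {})"
      by (auto simp: space_pair_measure)
    then show "emeasure ?P (Pair z -` ?S)
        = indicator {p. discordant (fst p) (snd p)} (z 0, z 1) * ennreal (discordance_prob C (z 0))"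
      by (simp add: emeasure_PiM_discordant_component)
  qed
  finally show ?thesis .
qed

lemma copula_perm_prob2_transpose_01:
  "copula_perm_prob2 C 2 (Transposition.transpose 0 1) 2 (Transposition.transpose 0 1)
    = (\<integral>a. (discordance_prob C a)\<^sup>2 \<partial>C)"
proof -
  let ?P = "PiM {..<2::nat} (\<lambda>_. C)" and ?\<Delta> = "{p. discordant (fst p) (snd p)}"
  let ?h = "discordance_prob C"
  let ?S = "{p \<in> space (?P \<Otimes>\<^sub>M ?P).
    discordant (fst p 0) (fst p 1) \<and> discordant (fst p 0) (snd p 1)}"
  have "emeasure (?P \<Otimes>\<^sub>M ?P) ?S
      = (\<integral>\<^sup>+z. indicator ?\<Delta> (z 0, z 1) * ennreal (?h (fst (z 0, z 1))) \<partial>?P)"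
    unfolding fst_conv by (rule emeasure_discordant_shared_first_point)
  also have "\<dots> = (\<integral>\<^sup>+a. \<integral>\<^sup>+b. indicator ?\<Delta> (a, b) * ennreal (?h (fst (a, b))) \<partial>C \<partial>C)"
    using sets_pair_discordant
    by (intro nn_integral_PiM_lessThan_2[OF sigma_finite_measure_axioms]
        borel_measurable_times_ennreal borel_measurable_indicator
        measurable_compose[OF measurable_fst borel_measurable_discordance_prob]
        measurable_compose[OF _ measurable_ennreal])
  also have "\<dots> = (\<integral>\<^sup>+a. ennreal ((?h a)\<^sup>2) \<partial>C)"
  proof (intro nn_integral_cong)
    fix a
    have "(\<integral>\<^sup>+b. indicator ?\<Delta> (a, b) * ennreal (?h (fst (a, b))) \<partial>C)
        = ennreal (?h a) * emeasure C {b. discordant a b}"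
      using sets_discordant
      by (simp add: nn_integral_cmult_indicator[symmetric] indicator_def mult.commute)
    then show "(\<integral>\<^sup>+b. indicator ?\<Delta> (a, b) * ennreal (?h (fst (a, b))) \<partial>C) = ennreal ((?h a)\<^sup>2)"
      by (simp add: emeasure_discordant power2_eq_square ennreal_mult discordance_prob_bounds)
  qed
  also have "\<dots> = ennreal (\<integral>a. (?h a)\<^sup>2 \<partial>C)"
    using integrable_discordance_prob_power[of 2] by (intro nn_integral_eq_integral) auto
  finally have "emeasure (?P \<Otimes>\<^sub>M ?P) ?S = ennreal (\<integral>a. (?h a)\<^sup>2 \<partial>C)" .
  moreover have "no_ties 2 (fst p) \<and> perm_pattern 2 (fst p) = Transposition.transpose 0 1 \<and>
      no_ties 2 ((snd p)(0 := fst p 0)) \<and>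
      perm_pattern 2 ((snd p)(0 := fst p 0)) = Transposition.transpose 0 1
      \<longleftrightarrow> discordant (fst p 0) (fst p 1) \<and> discordant (fst p 0) (snd p 1)" for p
    using perm_pattern_2_eq_transpose_iff[of "fst p"]
      perm_pattern_2_eq_transpose_iff[of "(snd p)(0 := fst p 0)"]
    by auto
  ultimately show ?thesis
    unfolding copula_perm_prob2_def by (intro measure_eq_emeasure_eq_ennreal) simp_all
qed

lemma copula_perm_prob2_minus_square_transpose_01:
  "copula_perm_prob2 C 2 (Transposition.transpose 0 1) 2 (Transposition.transpose 0 1)
    - (copula_perm_prob C 2 (Transposition.transpose 0 1))\<^sup>2 = variance (discordance_prob C)"
proof -
  have "integrable C (discordance_prob C)"
    using integrable_discordance_prob_power[of 1] by simp
  then show ?thesis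
    unfolding copula_perm_prob_transpose_01 copula_perm_prob2_transpose_01
    by (rule variance_eq[symmetric]) (rule integrable_discordance_prob_power)
qed

end

section \<open>The delay copula\<close>

lemma measure_uniform01_atMost: "measure (uniform_measure lborel {0..1::real}) {..t} = max 0 (min t 1)"
proof -
  have "{..t} \<inter> {0..1} = {0..min t 1}" by auto
  then have "emeasure (uniform_measure lborel {0..1::real}) {..t} = emeasure lborel {0..min t 1}"
    by (simp add: divide_ennreal_def min.commute)
  also have "\<dots> = ennreal (max 0 (min t 1))"
    by (simp add: max_def)
  finally show ?thesis
    by (intro measure_eq_emeasure_eq_ennreal) simp_all
qed

lemma measure_uniform01_Ioc:
  assumes "0 \<le> x" "x \<le> y" "y \<le> 1"
  shows "measure (uniform_measure lborel {0..1::real}) {x<..y} = y - x"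
proof -
  have "{x<..y} \<inter> {0..1} = {x<..y}" using assms by auto
  then have "emeasure (uniform_measure lborel {0..1::real}) {x<..y} = ennreal (y - x)"
    using assms by (simp add: divide_ennreal_def Int_commute)
  then show ?thesis
    using assms by (intro measure_eq_emeasure_eq_ennreal) simp_all
qed

locale delay_model = real_distribution D for D
begin

abbreviation law_XD :: "(real \<times> real) measure" where
  "law_XD \<equiv> uniform_measure lborel {0..1} \<Otimes>\<^sub>M D"

lemma prob_space_law_XD: "prob_space law_XD"
  by (intro prob_space_pair prob_space_uniform_measure prob_space_axioms) simp_all

lemma sets_law_XD: "sets law_XD = sets borel"
proof -
  have "sets law_XD = sets (borel \<Otimes>\<^sub>M borel :: (real \<times> real) measure)"
    by (intro sets_pair_measure_cong) simp_all
  then show ?thesis by (metis borel_prod)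
qed

lemma space_law_XD[simp]: "space law_XD = UNIV"
  using sets_eq_imp_space_eq[OF sets_law_XD] by simp

lemma measurable_law_XD_iff: "measurable law_XD N = measurable borel N"
  by (rule measurable_cong_sets[OF sets_law_XD refl])

lemma sets_law_XD_Collect: "Measurable.pred law_XD P \<Longrightarrow> Collect P \<in> sets law_XD"
  by (simp add: pred_def)

lemma measure_law_XD_Times:
  assumes "A \<in> sets borel" "B \<in> sets borel"
  shows "measure law_XD (A \<times> B) = measure (uniform_measure lborel {0..1}) A * measure D B"
  using assms by (simp add: measure_def emeasure_pair_measure_Times enn2real_mult)

lemma distr_delay_joint:
  assumes "g \<in> borel \<rightarrow>\<^sub>M borel"
  shows "distr (delay_joint D) borel g = distr law_XD borel (\<lambda>(x, d). g (x, x + d))"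
proof -
  have "(\<lambda>(x::real, d::real). (x, x + d)) \<in> borel \<Otimes>\<^sub>M borel \<rightarrow>\<^sub>M borel \<Otimes>\<^sub>M borel"
    by measurable
  then have "(\<lambda>(x::real, d::real). (x, x + d)) \<in> law_XD \<rightarrow>\<^sub>M borel"
    by (simp add: measurable_law_XD_iff borel_prod)
  then show ?thesis
    unfolding delay_joint_def using assms
    by (subst distr_distr) (simp_all add: comp_def case_prod_beta')
qed

lemma delay_F1_eq: "delay_F1 D x = max 0 (min x 1)"
proof -
  have "delay_F1 D x = measure law_XD {p. fst p \<le> x}"
    unfolding delay_F1_def cdf_def
    by (subst distr_delay_joint)
      (auto simp: borel_prod[symmetric] measure_distr vimage_def case_prod_beta)
  also have "{p. fst p \<le> x} = {..x} \<times> UNIV" by auto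
  finally show ?thesis
    using prob_space by (simp add: measure_law_XD_Times measure_uniform01_atMost)
qed

lemma delay_F2_eq: "delay_F2 D y = measure law_XD {p. fst p + snd p \<le> y}"
  unfolding delay_F2_def cdf_def
  by (subst distr_delay_joint)
    (auto simp: borel_prod[symmetric] measure_distr vimage_def case_prod_beta)

lemma mono_delay_F1: "mono (delay_F1 D)"
  unfolding delay_F1_eq by (intro monoI) simp

lemma mono_delay_F2: "mono (delay_F2 D)"
proof (intro monoI)
  interpret XD: prob_space law_XD by (rule prob_space_law_XD)
  fix x y :: real assume "x \<le> y"
  moreover have "{p. fst p + snd p \<le> y} \<in> sets law_XD"
    by (intro sets_law_XD_Collect) measurable
  ultimately show "delay_F2 D x \<le> delay_F2 D y"
    unfolding delay_F2_eq by (intro XD.finite_measure_mono) auto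
qed

lemmas borel_measurable_delay_F[measurable] =
  borel_measurable_mono[OF mono_delay_F1] borel_measurable_mono[OF mono_delay_F2]

definition copula_point :: "real \<times> real \<Rightarrow> real \<times> real" where
  "copula_point p = (delay_F1 D (fst p), delay_F2 D (fst p + snd p))"

lemma measurable_copula_point[measurable]: "copula_point \<in> law_XD \<rightarrow>\<^sub>M borel"
proof -
  have "copula_point \<in> borel \<Otimes>\<^sub>M borel \<rightarrow>\<^sub>M borel \<Otimes>\<^sub>M borel"
    unfolding copula_point_def by measurable
  then show ?thesis by (simp add: measurable_law_XD_iff borel_prod)
qed

lemma delay_copula_measure_eq_distr: "delay_copula_measure D = distr law_XD borel copula_point"
proof -
  have "(\<lambda>(x, y). (delay_F1 D x, delay_F2 D y))
      \<in> borel \<Otimes>\<^sub>M borel \<rightarrow>\<^sub>M (borel :: (real \<times> real) measure)"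
    by measurable
  then show ?thesis
    unfolding delay_copula_measure_def copula_point_def[abs_def]
    by (subst distr_delay_joint) (simp_all add: borel_prod case_prod_beta')
qed

lemma prob_space_delay_copula_measure: "prob_space (delay_copula_measure D)"
  unfolding delay_copula_measure_eq_distr
  by (intro prob_space.prob_space_distr[OF prob_space_law_XD] measurable_copula_point)

lemma sets_delay_copula_measure: "sets (delay_copula_measure D) = sets borel"
  unfolding delay_copula_measure_eq_distr by simp

lemma sets_discordant_copula_point: "{q. discordant a (copula_point q)} \<in> sets law_XD"
  by (intro sets_law_XD_Collect) measurable

lemma discordant_copula_point_subset:
  assumes "0 \<le> d"
  shows "{q. discordant (copula_point (x, d)) (copula_point q)}
    \<subseteq> {..x + d} \<times> UNIV \<union> UNIV \<times> {..0}"
proof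
  fix q assume "q \<in> {q. discordant (copula_point (x, d)) (copula_point q)}"
  then have "delay_F1 D (fst q) < delay_F1 D x \<or> delay_F2 D (fst q + snd q) < delay_F2 D (x + d)"
    by (auto simp: discordant_def copula_point_def)
  then have "fst q < x \<or> fst q + snd q < x + d"
    using mono_delay_F1 mono_delay_F2 by (meson monoD not_le)
  then show "q \<in> {..x + d} \<times> UNIV \<union> UNIV \<times> {..0}"
    using assms by (cases q) auto
qed

lemma discordance_prob_delay_copula_measure:
  "discordance_prob (delay_copula_measure D) a = measure law_XD {q. discordant a (copula_point q)}"
proof -
  have "{b \<in> space borel. discordant a b} \<in> sets borel" by measurable
  then show ?thesis
    unfolding discordance_prob_def delay_copula_measure_eq_distr
    by (subst measure_distr) (simp_all add: vimage_def)
qed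

end

locale positive_small_delays = delay_model +
  assumes cdf_0: "cdf D 0 = 0" and cdf_pos: "\<forall>\<epsilon>>0. cdf D \<epsilon> > 0"
begin

lemma measure_law_XD_rectangle_pos:
  assumes "0 \<le> x" "0 < w" "x + w \<le> 1" "0 < t"
  shows "0 < measure law_XD ({x<..x + w} \<times> {0<..t})"
proof -
  have "measure law_XD ({x<..x + w} \<times> {0<..t})
      = measure (uniform_measure lborel {0..1}) {x<..x + w} * measure D {0<..t}"
    by (rule measure_law_XD_Times) simp_all
  also have "measure (uniform_measure lborel {0..1}) {x<..x + w} = w"
    using assms measure_uniform01_Ioc[of x "x + w"] by simp
  also have "measure D {0<..t} = cdf D t - cdf D 0"
    using assms by (intro cdf_diff_eq[symmetric]) simp
  finally show ?thesis
    using assms cdf_0 cdf_pos by simp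
qed

lemma exists_cdf_less_1: "\<exists>b. 0 < b \<and> b \<le> 1/4 \<and> cdf D b < 1"
proof (rule ccontr)
  assume none: "\<not> ?thesis"
  have "eventually (\<lambda>b. b \<in> {0<..<1/4}) (at_right (0::real))"
    by (rule eventually_at_right_real) simp
  then have "eventually (\<lambda>b. cdf D b = 1) (at_right 0)"
  proof (rule eventually_mono)
    fix b :: real assume "b \<in> {0<..<1/4}"
    with none have "\<not> cdf D b < 1" by auto
    with cdf_bounded_prob[of b] show "cdf D b = 1" by linarith
  qed
  then have "(cdf D \<longlongrightarrow> 1) (at_right 0)"
    by (rule tendsto_eventually)
  moreover have "(cdf D \<longlongrightarrow> cdf D 0) (at_right 0)"
    using cdf_is_right_cont[of 0] by (simp add: continuous_within)
  ultimately have "cdf D 0 = 1"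
    using tendsto_unique[OF trivial_limit_at_right_real] by blast
  then show False
    using cdf_0 by simp
qed

lemma delay_F2_less:
  assumes "0 < b" "b \<le> 1/4" "0 \<le> x" "x \<le> 1/4"
  shows "delay_F2 D (x + b/2) < delay_F2 D (x + b)"
proof -
  interpret XD: prob_space law_XD by (rule prob_space_law_XD)
  let ?L = "{p. fst p + snd p \<le> x + b}" and ?K = "{p. fst p + snd p \<le> x + b/2}"
  let ?R = "{x + b/2<..x + b/2 + b/4} \<times> {0<..b/4}"
  have sets: "?L \<in> sets law_XD" "?K \<in> sets law_XD"
    by (intro sets_law_XD_Collect; measurable)+
  have "0 < measure law_XD ?R"
    using assms by (intro measure_law_XD_rectangle_pos) auto
  also have "\<dots> \<le> measure law_XD (?L - ?K)"
    using sets assms by (intro XD.finite_measure_mono) auto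
  also have "\<dots> = measure law_XD ?L - measure law_XD ?K"
    using sets assms by (intro XD.finite_measure_Diff) auto
  finally show ?thesis
    unfolding delay_F2_eq by simp
qed

lemma rectangle_subset_discordant_copula_point:
  assumes "0 < b" "b \<le> 1/4" "0 < x" "x \<le> 1/4" "b < d"
  shows "{x<..x + b/4} \<times> {0<..b/4} \<subseteq> {q. discordant (copula_point (x, d)) (copula_point q)}"
proof
  fix q assume "q \<in> {x<..x + b/4} \<times> {0<..b/4}"
  then obtain x' d' where q: "q = (x', d')" "x < x'" "x' \<le> x + b/4" "d' \<le> b/4"
    by (cases q) auto
  have "delay_F1 D x < delay_F1 D x'"
    using assms q by (simp add: delay_F1_eq)
  moreover have "delay_F2 D (x' + d') \<le> delay_F2 D (x + b/2)"
    using q by (intro monoD[OF mono_delay_F2]) simp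
  moreover have "delay_F2 D (x + b/2) < delay_F2 D (x + b)"
    using assms by (intro delay_F2_less) simp_all
  moreover have "delay_F2 D (x + b) \<le> delay_F2 D (x + d)"
    using assms by (intro monoD[OF mono_delay_F2]) simp
  ultimately show "q \<in> {q. discordant (copula_point (x, d)) (copula_point q)}"
    by (simp add: discordant_def copula_point_def q)
qed

lemma exists_set_discordance_prob_le:
  assumes "0 < \<delta>" "\<delta> \<le> 1/2"
  obtains A where "A \<in> sets law_XD" "0 < measure law_XD A"
    "\<forall>p\<in>A. discordance_prob (delay_copula_measure D) (copula_point p) \<le> 2 * \<delta>"
proof
  interpret XD: prob_space law_XD by (rule prob_space_law_XD)
  let ?A = "{0<..\<delta>} \<times> {0<..\<delta>}"
  show "?A \<in> sets law_XD"
    by (rule pair_measureI) simp_all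
  show "0 < measure law_XD ?A"
    using assms measure_law_XD_rectangle_pos[of 0 \<delta> \<delta>] by simp
  show "\<forall>p\<in>?A. discordance_prob (delay_copula_measure D) (copula_point p) \<le> 2 * \<delta>"
  proof
    fix p assume "p \<in> ?A"
    then obtain x d where p: "p = (x, d)" "0 < x" "x \<le> \<delta>" "0 < d" "d \<le> \<delta>" by (cases p) auto
    let ?S1 = "{..x + d} \<times> (UNIV :: real set)" and ?S2 = "(UNIV :: real set) \<times> {..0::real}"
    have sets: "?S1 \<in> sets law_XD" "?S2 \<in> sets law_XD"
      by auto
    have "{q. discordant (copula_point p) (copula_point q)} \<subseteq> ?S1 \<union> ?S2"
      using p discordant_copula_point_subset[of d x] by simp
    then have "discordance_prob (delay_copula_measure D) (copula_point p)
        \<le> measure law_XD (?S1 \<union> ?S2)"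
      unfolding discordance_prob_delay_copula_measure
      using sets by (intro XD.finite_measure_mono) auto
    also have "\<dots> \<le> measure law_XD ?S1 + measure law_XD ?S2"
      using sets by (rule measure_Un_le)
    also have "\<dots> = max 0 (min (x + d) 1) + cdf D 0"
      using prob_space XD.prob_space
      by (simp add: measure_law_XD_Times measure_uniform01_atMost cdf_def)
    also have "\<dots> \<le> 2 * \<delta>"
      using p assms cdf_0 by simp
    finally show "discordance_prob (delay_copula_measure D) (copula_point p) \<le> 2 * \<delta>" .
  qed
qed

lemma exists_set_discordance_prob_pos:
  obtains B where "B \<in> sets law_XD" "0 < measure law_XD B"
    "\<forall>p\<in>B. 0 < discordance_prob (delay_copula_measure D) (copula_point p)"
proof -
  interpret XD: prob_space law_XD by (rule prob_space_law_XD)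
  obtain b where b: "0 < b" "b \<le> 1/4" "cdf D b < 1"
    using exists_cdf_less_1 by blast
  let ?B = "{0<..1/4} \<times> {b<..}"
  have "measure D {b<..} = 1 - cdf D b"
    using prob_compl[of "{..b}"] by (simp add: cdf_def Compl_eq_Diff_UNIV[symmetric])
  then have "0 < measure law_XD ?B"
    using b measure_uniform01_Ioc[of 0 "1/4"] by (simp add: measure_law_XD_Times)
  moreover have "0 < discordance_prob (delay_copula_measure D) (copula_point p)" if "p \<in> ?B" for p
  proof -
    obtain x d where p: "p = (x, d)" "0 < x" "x \<le> 1/4" "b < d"
      using \<open>p \<in> ?B\<close> by (cases p) auto
    let ?R = "{x<..x + b/4} \<times> {0<..b/4}"
    have "?R \<subseteq> {q. discordant (copula_point p) (copula_point q)}"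
      using p b by (simp add: rectangle_subset_discordant_copula_point)
    then have "measure law_XD ?R \<le> discordance_prob (delay_copula_measure D) (copula_point p)"
      unfolding discordance_prob_delay_copula_measure
      using sets_discordant_copula_point by (intro XD.finite_measure_mono)
    moreover have "0 < measure law_XD ?R"
      using p b by (intro measure_law_XD_rectangle_pos) simp_all
    ultimately show ?thesis
      by linarith
  qed
  moreover have "?B \<in> sets law_XD"
    by auto
  ultimately show ?thesis
    using that by blast
qed

lemma not_AE_discordance_prob_const:
  "\<not> (AE p in law_XD. discordance_prob (delay_copula_measure D) (copula_point p) = c)"
proof
  assume const: "AE p in law_XD. discordance_prob (delay_copula_measure D) (copula_point p) = c"
  obtain B where "B \<in> sets law_XD" "0 < measure law_XD B"
    and pos: "\<forall>p\<in>B. 0 < discordance_prob (delay_copula_measure D) (copula_point p)"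
    by (rule exists_set_discordance_prob_pos)
  then obtain p where "p \<in> B" "discordance_prob (delay_copula_measure D) (copula_point p) = c"
    using const by (auto elim: AE_obtain_in_positive_set)
  then have "0 < c" "c \<le> 1"
    using pos prob_space.prob_le_1[OF prob_space_delay_copula_measure] by (auto simp: discordance_prob_def)
  then have "0 < c/4" "c/4 \<le> 1/2"
    by simp_all
  then obtain A where "A \<in> sets law_XD" "0 < measure law_XD A"
    and small: "\<forall>p\<in>A. discordance_prob (delay_copula_measure D) (copula_point p) \<le> 2 * (c/4)"
    by (rule exists_set_discordance_prob_le)
  then obtain q where "q \<in> A" "discordance_prob (delay_copula_measure D) (copula_point q) = c"
    using const by (auto elim: AE_obtain_in_positive_set)
  then show False
    using small \<open>0 < c\<close> by force
qed

lemma variance_discordance_prob_neq_0: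
  "prob_space.variance (delay_copula_measure D) (discordance_prob (delay_copula_measure D)) \<noteq> 0"
proof
  let ?C = "delay_copula_measure D"
  interpret C: prob_space ?C by (rule prob_space_delay_copula_measure)
  assume "C.variance (discordance_prob ?C) = 0"
  then have "AE a in ?C. discordance_prob ?C a = C.expectation (discordance_prob ?C)"
    using borel_measurable_discordance_prob[OF prob_space_delay_copula_measure sets_delay_copula_measure]
      integrable_discordance_prob_power[OF prob_space_delay_copula_measure sets_delay_copula_measure, of 2]
    by (intro C.variance_eq_0_imp_AE_eq_expectation)
  then have "AE p in law_XD. discordance_prob ?C (copula_point p) = C.expectation (discordance_prob ?C)"
    unfolding delay_copula_measure_eq_distr by (rule AE_distrD[OF measurable_copula_point])
  then show False
    using not_AE_discordance_prob_const by blast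
qed

end

theorem proposition3p3:
  fixes D :: "real measure"
  assumes "real_distribution D"
    and "cdf D 0 = 0"
    and "\<forall>\<epsilon>>0. cdf D \<epsilon> > 0"
  shows "\<exists>k \<sigma>. \<sigma> permutes {..<k} \<and>
    copula_perm_prob2 (delay_copula_measure D) k \<sigma> k \<sigma>
      - (copula_perm_prob (delay_copula_measure D) k \<sigma>)\<^sup>2 \<noteq> 0"
proof -
  interpret positive_small_delays D
    using assms
    by (simp add: positive_small_delays_def positive_small_delays_axioms_def delay_model_def)
  let ?\<sigma> = "Transposition.transpose (0::nat) 1"
  have "?\<sigma> permutes {..<2}"
    by (simp add: permutes_lessThan_2_iff)
  moreover have "copula_perm_prob2 (delay_copula_measure D) 2 ?\<sigma> 2 ?\<sigma>
      - (copula_perm_prob (delay_copula_measure D) 2 ?\<sigma>)\<^sup>2 \<noteq> 0"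
    unfolding copula_perm_prob2_minus_square_transpose_01[OF
        prob_space_delay_copula_measure sets_delay_copula_measure]
    by (rule variance_discordance_prob_neq_0)
  ultimately show ?thesis
    by blast
qed

end
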